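(* Let $(G,L,v)$ be a reachable triple, $i\in L(v)$ a color, and $D$ a nonnegative integer. Then (1) if $\deg_G(v)=2$, then $P(G,L,v,i,D)\ge \frac1{13}$; (2) if $\deg_G(v)\le1$, then $P(G,L,v,i,D)\ge\frac16$.
   Context: Colors are $[4]=\{1,2,3,4\}$. A list-coloring instance $(G,L)$ is a finite simple graph $G=(V,E)$ with $L:V\to 2^{[4]}$. For a vertex $v$, $G_v$ is $G$ with $v$ and its incident edges removed, and $G_{v,w}=(G_v)_w$. If $v$ has neighbors $v_1,\dots,v_d$ (in a fixed order), then for $k\in[d]$ and a color $j$, $L_{k,j}$ is the list assignment on $G_v$ with $L_{k,j}(v_\ell)=L(v_\ell)\setminus\{j\}$ for $\ell<k$ and $L_{k,j}(u)=L(u)$ for all other vertices $u$ (so $L_{1,j}=L$). A triple $(G,L,v)$ with $v\in V$ is reachable if $\deg_G(u)\le3$ and $|L(u)|\ge\deg_G(u)+1$ for every $u\in V$, and moreover $\deg_G(v)\le2$ and $|L(v)|\ge\deg_G(v)+2$. The procedure $P(G,L,v,i,D)$ ($i\in[4]$, $D$ an integer) is defined recursively (empty products equal $1$): (a) If $i\notin L(v)$, return $0$. Otherwise, if $D\le 0$ or $\deg_G(v)=0$, return $1/|L(v)|$. (b) If $\deg_G(v)=1$ with neighbor $v_1$: let $x=P(G_v,L,v_1,i,D-1)$. If $|L(v)|=2$, say $L(v)=\{i,j\}$, let $y=P(G_v,L,v_1,j,D-1)$ and return $\frac{1-x}{2-x-y}$. If $|L(v)|=4$, return $\frac{1-x}{3}$.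 If $|L(v)|=3$, let $j$ be the unique color in $[4]\setminus L(v)$, $y=P(G_v,L,v_1,j,D-1)$, and return $\frac{1-x}{2+y}$. (c) If $\deg_G(v)=2$: order its neighbors $v_1,v_2$ so that $\deg_G(v_1)\ge\deg_G(v_2)$ and, if $\deg_G(v_1)=\deg_G(v_2)=1$, so that $i\notin L(v_1)$ implies $i\notin L(v_2)$. Let $u_1,\dots,u_{d_1}$ be the neighbors of $v_1$ in $G_v$ (fixed order) and for $k\in[d_1]$, $w\in[4]$ let $L'_{k,w}$ be the list assignment on $G_{v,v_1}$ with $L'_{k,w}(u_\ell)=L(u_\ell)\setminus\{w\}$ for $\ell<k$ and $L'_{k,w}(u)=L(u)$ otherwise. Set $x_{k,w}=P(G_{v,v_1},L'_{k,w},u_k,w,D-1)$ for $k\in[d_1]$, $w\in L(v_1)$. For $j\in L(v)$ set $f_j=0$ if $j\notin L(v_1)$ and otherwise $f_j=\frac{\prod_{k=1}^{d_1}(1-x_{k,j})}{\sum_{w\in L(v_1)}\prod_{k=1}^{d_1}(1-x_{k,w})}$, and set $y_j=P(G_v,L_{2,j},v_2,j,D-1)$. Return $\frac{(1-f_i)(1-y_i)}{\sum_{j\in L(v)}(1-f_j)(1-y_j)}$. (d) If $\deg_G(v)=3$ with neighbors $v_1,v_2,v_3$: for $j\in L(v)$ let $x_j=P(G_v,L_{1,j},v_1,j,D-1)$, $y_j=P(G_v,L_{2,j},v_2,j,D-1)$, $z_j=P(G_v,L_{3,j},v_3,j,D-1)$, and return $\frac{(1-x_i)(1-y_i)(1-z_i)}{\sum_{j\in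 L(v)}(1-x_j)(1-y_j)(1-z_j)}$. For reachable triples, all recursive calls are again on reachable triples and case (d) never occurs. *)

theory Defs
  imports Complex_Main
begin

text \<open>Graphs: a vertex set V and a symmetric irreflexive edge relation E (a set of
ordered pairs, both orientations present). Lists: L :: vertex => set of colors (nat).\<close>

definition nbrs :: "('a \<times> 'a) set \<Rightarrow> 'a \<Rightarrow> 'a set" where
  "nbrs E v = {u. (v, u) \<in> E}"

definition deg :: "('a \<times> 'a) set \<Rightarrow> 'a \<Rightarrow> nat" where
  "deg E v = card (nbrs E v)"

definition delE :: "('a \<times> 'a) set \<Rightarrow> 'a \<Rightarrow> ('a \<times> 'a) set" where
  "delE E v = {(a, b) \<in> E. a \<noteq> v \<and> b \<noteq> v}"

definition lrm :: "('a \<Rightarrow> nat set) \<Rightarrow> 'a set \<Rightarrow> nat \<Rightarrow> ('a \<Rightarrow> nat set)" where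
  "lrm L S w = (\<lambda>u. if u \<in> S then L u - {w} else L u)"

definition simple_graph :: "'a set \<Rightarrow> ('a \<times> 'a) set \<Rightarrow> bool" where
  "simple_graph V E \<longleftrightarrow> finite V \<and> E \<subseteq> V \<times> V \<and> sym E \<and> (\<forall>x. (x, x) \<notin> E)"

text \<open>The "fixed order" of neighbours is an arbitrary ordering oracle nb: for a graph
(V,E) and vertex v, nb V E v lists the neighbours of v, each exactly once.\<close>
definition nbr_order :: "('a set \<Rightarrow> ('a \<times> 'a) set \<Rightarrow> 'a \<Rightarrow> 'a list) \<Rightarrow> bool" where
  "nbr_order nb \<longleftrightarrow> (\<forall>V E v. simple_graph V E \<and> v \<in> V \<longrightarrow>
       distinct (nb V E v) \<and> set (nb V E v) = nbrs E v)"

definition reachable :: "'a set \<Rightarrow> ('a \<times> 'a) set \<Rightarrow> ('a \<Rightarrow> nat set) \<Rightarrow> 'a \<Rightarrow> bool" where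
  "reachable V E L v \<longleftrightarrow> simple_graph V E \<and> v \<in> V \<and>
     (\<forall>u\<in>V. L u \<subseteq> {1..4}) \<and>
     (\<forall>u\<in>V. deg E u \<le> 3 \<and> card (L u) \<ge> deg E u + 1) \<and>
     deg E v \<le> 2 \<and> card (L v) \<ge> deg E v + 2"

text \<open>The procedure P(G,L,v,i,D), G = (V,E), with D a nonnegative integer (D = 0 is the
case D \<le> 0). Unspecified (unreachable) branches return 0.\<close>
primrec P :: "('a set \<Rightarrow> ('a \<times> 'a) set \<Rightarrow> 'a \<Rightarrow> 'a list) \<Rightarrow> 'a set \<Rightarrow> ('a \<times> 'a) set
    \<Rightarrow> ('a \<Rightarrow> nat set) \<Rightarrow> 'a \<Rightarrow> nat \<Rightarrow> nat \<Rightarrow> real" where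
  "P nb V E L v i 0 = (if i \<notin> L v then 0 else 1 / real (card (L v)))"
| "P nb V E L v i (Suc n) =
    (if i \<notin> L v then 0
     else if deg E v = 0 then 1 / real (card (L v))
     else
       (let ns = nb V E v; V' = V - {v}; E' = delE E v in
        if deg E v = 1 then
          (let v1 = ns ! 0; x = P nb V' E' L v1 i n in
           if card (L v) = 2 then
             (let j = the_elem (L v - {i}); y = P nb V' E' L v1 j n in (1 - x) / (2 - x - y))
           else if card (L v) = 4 then (1 - x) / 3
           else if card (L v) = 3 then
             (let j = the_elem ({1..4} - L v); y = P nb V' E' L v1 j n in (1 - x) / (2 + y))
           else 0)
        else if deg E v = 2 then
          (let a = ns ! 0; b = ns ! 1;
               swap = (deg E a < deg E b \<or>
                       (deg E a = 1 \<and> deg E b = 1 \<and> i \<notin> L a \<and> i \<in> L b));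
               v1 = (if swap then b else a); v2 = (if swap then a else b);
               us = nb V' E' v1; V'' = V' - {v1}; E'' = delE E' v1;
               x = (\<lambda>k w. P nb V'' E'' (lrm L (set (take k us)) w) (us ! k) w n);
               g = (\<lambda>w. \<Prod>k<length us. 1 - x k w);
               f = (\<lambda>j. if j \<notin> L v1 then 0 else g j / (\<Sum>w\<in>L v1. g w));
               y = (\<lambda>j. P nb V' E' (lrm L {v1} j) v2 j n)
           in (1 - f i) * (1 - y i) / (\<Sum>j\<in>L v. (1 - f j) * (1 - y j)))
        else if deg E v = 3 then
          (let v1 = ns ! 0; v2 = ns ! 1; v3 = ns ! 2;
               x = (\<lambda>j. P nb V' E' L v1 j n);
               y = (\<lambda>j. P nb V' E' (lrm L {v1} j) v2 j n);
               z = (\<lambda>j. P nb V' E' (lrm L {v1, v2} j) v3 j n)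
           in (1 - x i) * (1 - y i) * (1 - z i) /
              (\<Sum>j\<in>L v. (1 - x j) * (1 - y j) * (1 - z j)))
        else 0))"

end

theory Submission
  imports Defs
begin

text \<open>By induction on the depth D one proves, for every reachable triple, that P takes values
in [0, 1/2] together with the claimed lower bounds. For a vertex v of degree two the list of v is all of
{1..4}, and the numbers f_j form a probability distribution on the list of v_1 whose weights
are products of at most deg(v_1) factors in [1/2, 1]; since the list of v_1 is larger than
deg(v_1) + 1 this forces f_i \<le> 4/7. With y_j \<le> 1/2 the resulting ratio is at least 1/13.\<close>

lemma nbrs_delE: "x \<noteq> v \<Longrightarrow> nbrs (delE E v) x = nbrs E x - {v}"
  by (auto simp: nbrs_def delE_def)

lemma lrm_empty [simp]: "lrm L {} w = L"
  by (simp add: lrm_def)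

lemma reachableD:
  assumes "reachable V E L v"
  shows "simple_graph V E" "v \<in> V" "L v \<subseteq> {1..4}" "deg E v \<le> 2" "deg E v + 2 \<le> card (L v)"
    "card (L v) \<le> 4"
proof -
  show sg: "simple_graph V E" "v \<in> V" "L v \<subseteq> {1..4}" "deg E v \<le> 2" "deg E v + 2 \<le> card (L v)"
    using assms by (auto simp: reachable_def)
  show "card (L v) \<le> 4"
    using card_mono[OF _ sg(3)] by simp
qed

lemma reachable_nbr_list:
  assumes "nbr_order nb" "reachable V E L v"
  shows "distinct (nb V E v)" "set (nb V E v) = nbrs E v" "length (nb V E v) = deg E v"
  using assms reachableD[OF assms(2)] distinct_card unfolding nbr_order_def deg_def by metis+

text \<open>Deleting a reachable vertex v leaves every neighbour u reachable, even after a colour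
is removed from the lists of some other neighbours S: those lose one colour and one edge.\<close>
lemma reachable_delete:
  assumes R: "reachable V E L v" and S: "S \<subseteq> nbrs E v" and u: "u \<in> nbrs E v" "u \<notin> S"
  shows "reachable (V - {v}) (delE E v) (lrm L S w) u"
proof -
  from R have Lsub: "\<forall>u\<in>V. L u \<subseteq> {1..4}"
    and dg: "\<forall>u\<in>V. deg E u \<le> 3 \<and> deg E u + 1 \<le> card (L u)"
    by (auto simp: reachable_def)
  have fin: "finite V" "E \<subseteq> V \<times> V" "sym E" "\<forall>x. (x, x) \<notin> E"
    using reachableD(1)[OF R] by (auto simp: simple_graph_def)
  have nbV: "nbrs E x \<subseteq> V" for x
    using fin(2) by (auto simp: nbrs_def)
  have finnb: "finite (nbrs E x)" for x
    using nbV fin(1) finite_subset by blast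
  have uV: "u \<in> V - {v}"
    using u fin nbV by (auto simp: nbrs_def)
  have deg_le: "deg (delE E v) x \<le> deg E x" if "x \<noteq> v" for x
    unfolding deg_def using nbrs_delE[OF that] finnb by (simp add: card_mono)
  have deg_nbr: "deg (delE E v) x = deg E x - 1 \<and> 1 \<le> deg E x" if "x \<in> nbrs E v" for x
  proof -
    have "x \<noteq> v" using that fin(4) by (auto simp: nbrs_def)
    moreover have "v \<in> nbrs E x" using that fin(3) by (auto simp: nbrs_def sym_def)
    ultimately show ?thesis unfolding deg_def using nbrs_delE finnb
      by (metis One_nat_def Suc_leI card_Diff_singleton card_gt_0_iff empty_iff)
  qed
  have card_rm: "card (L x) \<le> card (L x - {w}) + 1" for x
    by (simp add: card_Diff_singleton_if, linarith)
  show ?thesis unfolding reachable_def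
  proof (intro conjI ballI)
    show "simple_graph (V - {v}) (delE E v)"
      using fin unfolding simple_graph_def delE_def sym_def by auto
    show "u \<in> V - {v}" by (rule uV)
    fix x assume x: "x \<in> V - {v}"
    show "lrm L S w x \<subseteq> {1..4}" using Lsub x by (auto simp: lrm_def)
    show "deg (delE E v) x \<le> 3" using deg_le[of x] x dg by force
    show "deg (delE E v) x + 1 \<le> card (lrm L S w x)"
    proof (cases "x \<in> S")
      case True
      then show ?thesis using deg_nbr[of x] card_rm[of x] S dg x by (force simp: lrm_def)
    next
      case False
      then show ?thesis using deg_le[of x] dg x by (fastforce simp: lrm_def)
    qed
  next
    show "deg (delE E v) u \<le> 2" using deg_nbr[OF u(1)] dg uV by force
    show "deg (delE E v) u + 2 \<le> card (lrm L S w u)"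
      using deg_nbr[OF u(1)] dg uV u(2) by (force simp: lrm_def)
  qed
qed

lemma reachable_delete_nth_nbr:
  assumes "nbr_order nb" "reachable V E L v" "k < length (nb V E v)"
  shows "reachable (V - {v}) (delE E v) (lrm L (set (take k (nb V E v))) w) (nb V E v ! k)"
proof (rule reachable_delete[OF assms(2)])
  note ns = reachable_nbr_list[OF assms(1,2)]
  show "set (take k (nb V E v)) \<subseteq> nbrs E v" using ns(2) set_take_subset by metis
  show "nb V E v ! k \<in> nbrs E v" using ns(2) assms(3) nth_mem by metis
  show "nb V E v ! k \<notin> set (take k (nb V E v))"
    using ns(1) assms(3) by (auto simp: in_set_conv_nth nth_eq_iff_index_eq)
qed

definition share :: "(nat \<Rightarrow> real) \<Rightarrow> nat set \<Rightarrow> nat \<Rightarrow> real" where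
  "share g B j = (if j \<notin> B then 0 else g j / (\<Sum>w\<in>B. g w))"

lemma share_nonneg: "(\<And>w. w \<in> B \<Longrightarrow> 0 \<le> g w) \<Longrightarrow> 0 \<le> share g B j"
  by (simp add: share_def sum_nonneg)

lemma sum_share:
  assumes "finite A" "B \<subseteq> A" "sum g B \<noteq> 0"
  shows "sum (share g B) A = 1"
proof -
  have "sum (share g B) A = sum (share g B) B"
    using assms by (intro sum.mono_neutral_right) (auto simp: share_def)
  also have "\<dots> = sum g B / sum g B"
    by (simp add: share_def sum_divide_distrib[symmetric])
  finally show ?thesis using assms(3) by simp
qed

lemma share_le:
  assumes B: "finite B" "i \<in> B" and g: "\<And>w. w \<in> B \<Longrightarrow> c \<le> g w \<and> g w \<le> 1" and c: "0 < c"
  shows "share g B i \<le> 1 / (1 + (real (card B) - 1) * c)"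
proof -
  define R where "R = sum g (B - {i})"
  have card_pos: "1 \<le> card B" using B by (cases "card B") auto
  have "real (card (B - {i})) * c \<le> R"
    using sum_mono[of "B - {i}" "\<lambda>_. c" g] g unfolding R_def by simp
  then have R_lower: "(real (card B) - 1) * c \<le> R"
    using B card_pos by (simp add: of_nat_diff)
  have R_nonneg: "0 \<le> (real (card B) - 1) * c" using card_pos c by simp
  have gi: "0 < g i" "g i \<le> 1" using g[OF B(2)] c by linarith+
  have "share g B i = g i / (g i + R)"
    using B by (simp add: share_def R_def sum.remove)
  also have "\<dots> \<le> 1 / (1 + R)"
  proof -
    have "0 \<le> R" using R_lower R_nonneg by linarith
    then have "g i * (1 + R) \<le> g i + R" using mult_left_le[of "g i" R] gi by (simp add: algebra_simps)
    then show ?thesis using gi \<open>0 \<le> R\<close> by (simp add: divide_simps)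
  qed
  also have "\<dots> \<le> 1 / (1 + (real (card B) - 1) * c)"
    using R_lower R_nonneg by (intro divide_left_mono) auto
  finally show ?thesis .
qed

lemma share_ratio_bounds:
  fixes f y :: "nat \<Rightarrow> real"
  assumes A: "finite A" "card A = 4" "i \<in> A"
    and f: "\<And>j. j \<in> A \<Longrightarrow> 0 \<le> f j" "sum f A = 1" "f i \<le> 4/7"
    and y: "\<And>j. j \<in> A \<Longrightarrow> 0 \<le> y j \<and> y j \<le> 1/2"
  shows "1/13 \<le> (1 - f i) * (1 - y i) / (\<Sum>j\<in>A. (1 - f j) * (1 - y j))
    \<and> (1 - f i) * (1 - y i) / (\<Sum>j\<in>A. (1 - f j) * (1 - y j)) \<le> 1/2"
proof -
  define N where "N = (1 - f i) * (1 - y i)"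
  define M where "M = (\<Sum>j\<in>A-{i}. (1 - f j) * (1 - y j))"
  have f_le_1: "f j \<le> 1" if "j \<in> A" for j
    using member_le_sum[of j A f] f that A(1) by simp
  have total: "(\<Sum>j\<in>A. (1 - f j) * (1 - y j)) = N + M"
    using A by (simp add: N_def M_def sum.remove)
  have others: "(\<Sum>j\<in>A-{i}. 1 - f j) = 2 + f i"
    using A f(2) by (simp add: sum_subtractf sum_diff1)
  have term_bounds: "1 - f j \<le> 2 * ((1 - f j) * (1 - y j)) \<and> (1 - f j) * (1 - y j) \<le> 1 - f j"
    if "j \<in> A" for j
  proof -
    have "0 \<le> 1 - f j" "1/2 \<le> 1 - y j" "1 - y j \<le> 1" using f_le_1 y that by auto
    then show ?thesis using mult_left_mono[of "1/2" "1 - y j" "1 - f j"] by (simp add: mult_left_le)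
  qed
  have "(\<Sum>j\<in>A-{i}. 1 - f j) \<le> (\<Sum>j\<in>A-{i}. 2 * ((1 - f j) * (1 - y j)))"
    using term_bounds by (intro sum_mono) auto
  then have M_lower: "2 + f i \<le> 2 * M"
    using others by (simp add: M_def sum_distrib_left)
  have "M \<le> (\<Sum>j\<in>A-{i}. 1 - f j)"
    unfolding M_def using term_bounds by (intro sum_mono) auto
  then have M_upper: "M \<le> 2 + f i" using others by simp
  have N_lower: "1 - f i \<le> 2 * N" and N_upper: "N \<le> 1 - f i"
    unfolding N_def using term_bounds[OF A(3)] by auto
  have "0 \<le> f i" using f A by simp
  then have "N + M \<le> 13 * N" "2 * N \<le> N + M" "0 < N + M"
    using M_lower M_upper N_lower N_upper f(3) by linarith+
  then show ?thesis unfolding total N_def[symmetric] by (simp add: divide_simps)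
qed

lemma inverse_card_list_bounds:
  assumes "reachable V E L v"
  shows "1/4 \<le> 1 / real (card (L v)) \<and> 1 / real (card (L v)) \<le> 1/2"
  using reachableD[OF assms] by (simp add: divide_simps)

lemma P_deg1_step:
  assumes nb: "nbr_order nb"
    and IH: "\<And>V E L v j. reachable V E L v \<Longrightarrow> 0 \<le> P nb V E L v j n \<and> P nb V E L v j n \<le> 1/2"
    and R: "reachable V E L v" and deg: "deg E v = 1" and i: "i \<in> L v"
  shows "1/6 \<le> P nb V E L v i (Suc n) \<and> P nb V E L v i (Suc n) \<le> 1/2"
proof -
  define v1 where "v1 = nb V E v ! 0"
  have R1: "reachable (V - {v}) (delE E v) L v1"
    using reachable_delete_nth_nbr[OF nb R, of 0] reachable_nbr_list[OF nb R] deg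
    by (simp add: v1_def)
  define x where "x = P nb (V - {v}) (delE E v) L v1 i n"
  define y where "y = P nb (V - {v}) (delE E v) L v1 (the_elem ({1..4} - L v)) n"
  have x: "0 \<le> x" "x \<le> 1/2" and y: "0 \<le> y" "y \<le> 1/2"
    using IH[OF R1] unfolding x_def y_def by auto
  have "card (L v) = 3 \<or> card (L v) = 4"
    using reachableD[OF R] deg by linarith
  then have "P nb V E L v i (Suc n) = (if card (L v) = 4 then (1 - x) / 3 else (1 - x) / (2 + y))"
    using i deg by (auto simp: Let_def x_def y_def v1_def)
  then show ?thesis
    using x y by (simp add: divide_simps)
qed

lemma P_deg2_step:
  assumes nb: "nbr_order nb"
    and IH: "\<And>V E L v j. reachable V E L v \<Longrightarrow> 0 \<le> P nb V E L v j n \<and> P nb V E L v j n \<le> 1/2"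
    and R: "reachable V E L v" and deg: "deg E v = 2" and i: "i \<in> L v"
  shows "1/13 \<le> P nb V E L v i (Suc n) \<and> P nb V E L v i (Suc n) \<le> 1/2"
proof -
  define a where "a = nb V E v ! 0"
  define b where "b = nb V E v ! 1"
  define swap where "swap = (deg E a < deg E b \<or> (deg E a = 1 \<and> deg E b = 1 \<and> i \<notin> L a \<and> i \<in> L b))"
  define v1 where "v1 = (if swap then b else a)"
  define v2 where "v2 = (if swap then a else b)"
  define V' where "V' = V - {v}"
  define E' where "E' = delE E v"
  define us where "us = nb V' E' v1"
  define x where "x = (\<lambda>k w. P nb (V' - {v1}) (delE E' v1) (lrm L (set (take k us)) w) (us ! k) w n)"
  define g where "g = (\<lambda>w. \<Prod>k<length us. 1 - x k w)"
  define y where "y = (\<lambda>j. P nb V' E' (lrm L {v1} j) v2 j n)"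
  have branch: "(i \<notin> L v) = False" "(deg E v = 0) = False" "(deg E v = 1) = False" "(deg E v = 2) = True"
    using i deg by auto
  have P_eq: "P nb V E L v i (Suc n) =
      (1 - share g (L v1) i) * (1 - y i) / (\<Sum>j\<in>L v. (1 - share g (L v1) j) * (1 - y j))"
    unfolding P.simps(2)[of nb V E L v i n] Let_def branch if_False if_True
    unfolding share_def y_def g_def x_def us_def v1_def v2_def swap_def a_def b_def E'_def V'_def
    by (rule refl)
  have Lv: "L v = {1..4}"
    using reachableD[OF R] deg by (intro card_subset_eq) auto
  note ns = reachable_nbr_list[OF nb R]
  have "a \<in> set (nb V E v)" "b \<in> set (nb V E v)" "a \<noteq> b"
    using ns(1,3) deg unfolding a_def b_def by (simp_all add: nth_eq_iff_index_eq)
  then have "v1 \<in> nbrs E v" "v2 \<in> nbrs E v" "v1 \<noteq> v2"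
    unfolding v1_def v2_def ns(2) by auto
  then have R1: "reachable V' E' L v1" and R2: "\<And>j. reachable V' E' (lrm L {v1} j) v2"
    unfolding V'_def E'_def using reachable_delete[OF R, of "{}"] reachable_delete[OF R] by auto
  define m where "m = length us"
  have g: "(1/2) ^ m \<le> g w \<and> g w \<le> 1" for w
  proof -
    have x: "0 \<le> x k w \<and> x k w \<le> 1/2" if "k < m" for k
      using IH[OF reachable_delete_nth_nbr[OF nb R1]] that unfolding x_def us_def m_def by blast
    have "(\<Prod>k<m. (1/2::real)) \<le> g w"
      unfolding g_def m_def[symmetric]
    proof (intro prod_mono)
      fix k assume "k \<in> {..<m}"
      then show "0 \<le> (1/2::real) \<and> 1/2 \<le> 1 - x k w" using x[of k] by simp
    qed
    moreover have "g w \<le> 1"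
      unfolding g_def m_def[symmetric]
    proof (intro prod_le_1)
      fix k assume "k \<in> {..<m}"
      then show "0 \<le> 1 - x k w \<and> 1 - x k w \<le> 1" using x[of k] by simp
    qed
    ultimately show ?thesis by simp
  qed
  have L1: "m + 2 \<le> card (L v1)" "card (L v1) \<le> 4" "L v1 \<subseteq> {1..4}"
    using reachableD[OF R1] reachable_nbr_list[OF nb R1] unfolding m_def us_def by auto
  have weight: "3/4 \<le> (real (card (L v1)) - 1) * (1/2) ^ m"
  proof -
    have card_L1: "real m + 2 \<le> real (card (L v1))" using L1(1) by linarith
    consider "m = 0" | "m = 1" | "m = 2" using L1(1,2) by linarith
    then show ?thesis using card_L1 by cases (simp_all add: power2_eq_square)
  qed
  have share_i: "share g (L v1) i \<le> 4/7"
  proof (cases "i \<in> L v1")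
    case True
    have "share g (L v1) i \<le> 1 / (1 + (real (card (L v1)) - 1) * (1/2) ^ m)"
      using L1(3) g True by (intro share_le) (auto intro: finite_subset)
    also have "\<dots> \<le> 1 / (1 + 3/4)"
      using weight by (intro divide_left_mono mult_pos_pos) auto
    also have "\<dots> = 4/7" by simp
    finally show ?thesis .
  qed (simp add: share_def)
  have g_pos: "0 < g w" for w
    using g[of w] zero_less_power[of "1/2::real" m] by linarith
  have "sum (share g (L v1)) (L v) = 1"
  proof (rule sum_share)
    have "L v1 \<noteq> {}" using L1(1) by auto
    then show "sum g (L v1) \<noteq> 0"
      using L1(3) g_pos by (intro less_imp_neq[symmetric] sum_pos) (auto intro: finite_subset)
  qed (use Lv L1(3) in auto)
  then have "1/13 \<le> (1 - share g (L v1) i) * (1 - y i) / (\<Sum>j\<in>L v. (1 - share g (L v1) j) * (1 - y j))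
      \<and> (1 - share g (L v1) i) * (1 - y i) / (\<Sum>j\<in>L v. (1 - share g (L v1) j) * (1 - y j)) \<le> 1/2"
    using Lv i share_i share_nonneg[of "L v1" g] g_pos IH[OF R2] unfolding y_def
    by (intro share_ratio_bounds) (auto intro: less_imp_le)
  then show ?thesis unfolding P_eq .
qed

lemma P_bounds:
  assumes nb: "nbr_order nb" and R: "reachable V E L v"
  shows "0 \<le> P nb V E L v i D \<and> P nb V E L v i D \<le> 1/2
    \<and> (i \<in> L v \<longrightarrow> (deg E v = 2 \<longrightarrow> 1/13 \<le> P nb V E L v i D) \<and> (deg E v \<le> 1 \<longrightarrow> 1/6 \<le> P nb V E L v i D))"
  using R
proof (induction D arbitrary: V E L v i)
  case 0
  then show ?case using inverse_card_list_bounds[OF "0.prems"] by auto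
next
  case (Suc n)
  have IH: "\<And>V E L v j. reachable V E L v \<Longrightarrow> 0 \<le> P nb V E L v j n \<and> P nb V E L v j n \<le> 1/2"
    using Suc.IH by blast
  show ?case
  proof (cases "i \<in> L v")
    case i: True
    consider "deg E v = 0" | "deg E v = 1" | "deg E v = 2"
      using reachableD(4)[OF Suc.prems] by linarith
    then show ?thesis
    proof cases
      case 1
      then show ?thesis using i inverse_card_list_bounds[OF Suc.prems] by simp
    next
      case 2
      then show ?thesis using P_deg1_step[OF nb IH Suc.prems 2 i] by (simp del: P.simps)
    next
      case 3
      then show ?thesis using P_deg2_step[OF nb IH Suc.prems 3 i] by (simp del: P.simps)
    qed
  qed simp
qed

theorem proposition8:
  fixes nb :: "'a set \<Rightarrow> ('a \<times> 'a) set \<Rightarrow> 'a \<Rightarrow> 'a list"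
    and V :: "'a set" and E :: "('a \<times> 'a) set" and L :: "'a \<Rightarrow> nat set"
    and v :: 'a and i :: nat and D :: nat
  assumes "nbr_order nb"
    and "reachable V E L v"
    and "i \<in> L v"
  shows "(deg E v = 2 \<longrightarrow> P nb V E L v i D \<ge> 1 / 13) \<and>
         (deg E v \<le> 1 \<longrightarrow> P nb V E L v i D \<ge> 1 / 6)"
  using P_bounds[OF assms(1,2), of i D] assms(3) by simp

end
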